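(* Let $S\subseteq M_n$ be a noncommutative graph. Then $\mathcal{H}(S)$ equals the minimum $k$ such that there exist $m\in\mathbb{N}$ and matrices $E_1,\dots,E_m,F_1,\dots,F_m\in M_{k\times n}$ with $\sum_{i=1}^m F_i^\dagger E_i=I_n$ (equivalently, the linear map $\Psi:M_n\to M_k$, $\Psi(X)=\sum_{i=1}^m E_iXF_i^\dagger$, is trace-preserving) and $T_\Psi:=\mathrm{span}\{F_i^\dagger E_j:\ i,j\in[m]\}\subseteq S$.
   Context: All scalars are complex; $M_{k\times n}$ denotes complex $k\times n$ matrices and $M_n=M_{n\times n}$. A noncommutative graph is a linear subspace $S\subseteq M_n$ that contains $I_n$ and is closed under conjugate transpose. For a subspace $S\subseteq M_n$, $M_m(S)$ denotes the set of $m\times m$ block matrices $B=[B_{i,j}]_{i,j\in[m]}$ with every block $B_{i,j}\in S$, viewed as elements of $M_{mn}$. The Haemers bound is $\mathcal{H}(S)=\min\{\mathrm{rk}(B):\ m\in\mathbb{N},\ B\in M_m(S),\ \sum_{i=1}^m B_{i,i}=I_n\}$. Every trace-preserving linear map $M_n\to M_k$ can be written as $X\mapsto\sum_i E_iXF_i^\dagger$ with $\sum_i F_i^\dagger E_i=I_n$. *)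

theory Defs
  imports "Jordan_Normal_Form.Schur_Decomposition" "Jordan_Normal_Form.DL_Rank"
begin

definition msum :: "nat \<Rightarrow> nat \<Rightarrow> (nat \<Rightarrow> complex mat) \<Rightarrow> nat \<Rightarrow> complex mat" where
  "msum r c f m = mat r c (\<lambda>ij. \<Sum>i<m. f i $$ ij)"

definition mat_span :: "nat \<Rightarrow> complex mat set \<Rightarrow> complex mat set" where
  "mat_span n A = {X. \<exists>N (c :: nat \<Rightarrow> complex) M. (\<forall>j<N. M j \<in> A) \<and>
       X = mat n n (\<lambda>ab. \<Sum>j<N. c j * M j $$ ab)}"

definition nc_graph :: "nat \<Rightarrow> complex mat set \<Rightarrow> bool" where
  "nc_graph n S \<longleftrightarrow> S \<subseteq> carrier_mat n n \<and> 0\<^sub>m n n \<in> S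
     \<and> (\<forall>X\<in>S. \<forall>Y\<in>S. X + Y \<in> S) \<and> (\<forall>a. \<forall>X\<in>S. a \<cdot>\<^sub>m X \<in> S)
     \<and> 1\<^sub>m n \<in> S \<and> (\<forall>X\<in>S. mat_adjoint X \<in> S)"

definition blk :: "nat \<Rightarrow> complex mat \<Rightarrow> nat \<Rightarrow> nat \<Rightarrow> complex mat" where
  "blk n B i j = mat n n (\<lambda>(a,b). B $$ (i*n+a, j*n+b))"

definition haemers :: "nat \<Rightarrow> complex mat set \<Rightarrow> nat" where
  "haemers n S = (LEAST r. \<exists>m B. B \<in> carrier_mat (m*n) (m*n)
       \<and> (\<forall>i<m. \<forall>j<m. blk n B i j \<in> S)
       \<and> msum n n (\<lambda>i. blk n B i i) m = 1\<^sub>m n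
       \<and> vec_space.rank (m*n) B = r)"

end

theory Submission
  imports Defs
begin

text \<open>A block matrix B \<in> M_m(S) of rank r factors as B = U W with U of size mn x r and
  W of size r x mn. Cutting U into n x r row blocks U_i and W into r x n column blocks W_j gives
  B_ij = U_i W_j, so E_j = W_j and F_i = U_i^\<dagger> satisfy \<Sum> F_i^\<dagger> E_i = \<Sum> B_ii = I_n, and
  span {F_i^\<dagger> E_j} \<subseteq> S because S is a subspace containing every B_ij. Conversely, stacking the
  F_i^\<dagger> vertically and the E_j horizontally factors B = [F_i^\<dagger> E_j] through dimension k,
  so rk B \<le> k.\<close>

lemma dim_row_mat_adjoint [simp]: "dim_row (mat_adjoint A) = dim_col A"
  and dim_col_mat_adjoint [simp]: "dim_col (mat_adjoint A) = dim_row A"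
  unfolding mat_adjoint_def by auto

lemma index_mat_adjoint [simp]:
  "i < dim_col A \<Longrightarrow> j < dim_row A \<Longrightarrow> mat_adjoint A $$ (i, j) = conjugate (A $$ (j, i))"
  unfolding mat_adjoint_def by (auto simp: mat_of_rows_def)

lemma mat_adjoint_adjoint [simp]: "mat_adjoint (mat_adjoint A) = A"
  by (rule eq_matI) auto

lemma mat_adjoint_carrier_mat [simp]: "mat_adjoint A \<in> carrier_mat m n \<longleftrightarrow> A \<in> carrier_mat n m"
  unfolding carrier_mat_def by auto

lemma (in vec_space) rank_le_of_cols_in_span:
  assumes A: "A \<in> carrier_mat n nc" and C: "C \<in> carrier_mat n k"
    and sub: "set (cols A) \<subseteq> span (set (cols C))"
  shows "rank A \<le> rank C"
proof -
  have Cc: "set (cols C) \<subseteq> carrier_vec n" using C cols_dim by blast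
  have vs: "vectorspace class_ring (vs (span (set (cols C))))"
    using span_is_subspace[THEN subspace_is_vs, OF Cc] by auto
  have sm: "submodule class_ring (span (set (cols C))) V" using Cc by (simp add: span_is_submodule)
  have sub2: "VectorSpace.subspace class_ring (span (set (cols A))) (vs (span (set (cols C))))"
    using vectorspace.span_is_subspace[OF vs, of "set (cols A)", unfolded
    span_li_not_depend(1)[OF sub sm]] sub by auto
  have fin_dim: "vectorspace.fin_dim class_ring (vs (span (set (cols C))))"
       "vectorspace.fin_dim class_ring (vs (span (set (cols C)))\<lparr>carrier := span (set (cols A))\<rparr>)"
    using fin_dim_span_cols A C by auto
  show ?thesis
    unfolding rank_def using vectorspace.subspace_dim[OF vs sub2 fin_dim(1) fin_dim(2)] by simp
qed

lemma (in vec_space) cols_mult_in_span: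
  assumes U: "U \<in> carrier_mat n k" and W: "W \<in> carrier_mat k nc"
  shows "set (cols (U * W)) \<subseteq> span (set (cols U))"
proof
  have Uc: "set (cols U) \<subseteq> carrier_vec n" using U cols_dim by blast
  fix x assume "x \<in> set (cols (U * W))"
  then obtain q where q: "q < nc" "x = col (U * W) q" using U W
    by (metis cols_length cols_nth in_set_conv_nth carrier_matD index_mult_mat(3))
  have cw: "vec (length (cols U)) (\<lambda>i. col W q $ i) = col W q"
    using U W q by (intro eq_vecI) auto
  have "x = U *\<^sub>v col W q" unfolding q(2) by (rule col_mult2[OF U W q(1)])
  also have "\<dots> = mat_of_cols n (cols U) *\<^sub>v vec (length (cols U)) (\<lambda>i. col W q $ i)"
    using U cw mat_of_cols_cols[of U] by simp
  also have "\<dots> = lincomb_list (\<lambda>i. col W q $ i) (cols U)"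
    by (rule lincomb_list_as_mat_mult[symmetric], insert Uc U, auto)
  also have "\<dots> \<in> span_list (cols U)" by (auto simp: span_list_def)
  finally show "x \<in> span (set (cols U))" using span_list_as_span[OF Uc] by auto
qed

lemma (in vec_space) rank_mult_le_inner_dim:
  assumes U: "U \<in> carrier_mat n k" and W: "W \<in> carrier_mat k nc"
  shows "rank (U * W) \<le> k"
proof -
  have "rank (U * W) \<le> rank U"
    using rank_le_of_cols_in_span[OF mult_carrier_mat[OF U W] U cols_mult_in_span[OF U W]] .
  also have "\<dots> \<le> k" using rank_le_nc[OF U] .
  finally show ?thesis .
qed

lemma (in vec_space) maximal_indpt_cols_span:
  assumes B: "B \<in> carrier_mat n nc"
    and max: "maximal T (\<lambda>T. T \<subseteq> set (cols B) \<and> lin_indpt T)"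
  shows "set (cols B) \<subseteq> span T"
proof
  have TB: "T \<subseteq> set (cols B)" and li: "lin_indpt T" using max unfolding maximal_def by auto
  have Bc: "set (cols B) \<subseteq> carrier_vec n" using B cols_dim by blast
  then have Tc: "T \<subseteq> carrier_vec n" using TB by auto
  fix v assume v: "v \<in> set (cols B)"
  show "v \<in> span T"
  proof (rule ccontr)
    assume v_out: "v \<notin> span T"
    then have "v \<notin> T" using Tc span_mem by auto
    then have "lin_indpt (T \<union> {v})"
      using lin_dep_iff_in_span[OF Tc li] v v_out Bc by auto
    moreover have "T \<union> {v} \<subseteq> set (cols B)" using TB v by auto
    ultimately have "T \<union> {v} = T" using max unfolding maximal_def by blast
    with \<open>v \<notin> T\<close> show False by auto
  qed
qed

lemma (in vec_space) factor_through_span_cols: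
  assumes B: "B \<in> carrier_mat n nc" and us: "set us \<subseteq> carrier_vec n"
    and sp: "set (cols B) \<subseteq> span (set us)"
  shows "\<exists>W. W \<in> carrier_mat (length us) nc \<and> B = mat_of_cols n us * W"
proof -
  have "\<exists>c. col B q = lincomb_list c us" if q: "q < nc" for q
  proof -
    have "col B q \<in> set (cols B)" using q B by (metis cols_length cols_nth carrier_matD(2) nth_mem)
    then show ?thesis using sp span_list_as_span[OF us] by (auto simp: span_list_def)
  qed
  then obtain c where c: "\<And>q. q < nc \<Longrightarrow> col B q = lincomb_list (c q) us" by metis
  define W where "W = mat (length us) nc (\<lambda>(i, q). c q i)"
  have "B = mat_of_cols n us * W"
  proof (rule eq_matI)
    fix p q assume p: "p < dim_row (mat_of_cols n us * W)" and q: "q < dim_col (mat_of_cols n us * W)"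
    then have pn: "p < n" and qn: "q < nc" by (auto simp: W_def)
    have cw: "col W q = vec (length us) (c q)" using qn by (intro eq_vecI) (auto simp: W_def)
    have "(mat_of_cols n us * W) $$ (p, q) = (mat_of_cols n us *\<^sub>v col W q) $ p"
      using pn qn by (simp add: W_def)
    also have "mat_of_cols n us *\<^sub>v col W q = col B q"
      using us by (simp add: cw c[OF qn] lincomb_list_as_mat_mult subset_code(1))
    finally show "B $$ (p, q) = (mat_of_cols n us * W) $$ (p, q)" using pn qn B by simp
  qed (use B in \<open>auto simp: W_def\<close>)
  moreover have "W \<in> carrier_mat (length us) nc" by (simp add: W_def)
  ultimately show ?thesis by blast
qed

lemma (in vec_space) rank_factorization:
  assumes B: "B \<in> carrier_mat n nc"
  shows "\<exists>U W. U \<in> carrier_mat n (rank B) \<and> W \<in> carrier_mat (rank B) nc \<and> B = U * W"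
proof -
  obtain T where max: "maximal T (\<lambda>T. T \<subseteq> set (cols B) \<and> lin_indpt T)"
    using maximal_exists[of "\<lambda>T. T \<subseteq> set (cols B) \<and> lin_indpt T" "card (set (cols B))" "{}"]
    by (meson List.finite_set card_mono empty_iff empty_subsetI finite_lin_indpt2 rev_finite_subset)
  then have TB: "T \<subseteq> set (cols B)" unfolding maximal_def by auto
  then obtain us where us: "set us = T" "distinct us"
    using finite_distinct_list finite_subset by (metis List.finite_set)
  have len: "length us = rank B" using rank_card_indpt[OF B max] us distinct_card by fastforce
  have usc: "set us \<subseteq> carrier_vec n" using TB us B cols_dim by blast
  obtain W where "W \<in> carrier_mat (length us) nc" "B = mat_of_cols n us * W"
    using factor_through_span_cols[OF B usc] maximal_indpt_cols_span[OF B max] us by blast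
  then show ?thesis using len by (intro exI[of _ "mat_of_cols n us"] exI[of _ W]) auto
qed

definition row_blk :: "nat \<Rightarrow> 'a mat \<Rightarrow> nat \<Rightarrow> 'a mat" where
  "row_blk n U i = mat n (dim_col U) (\<lambda>(a, c). U $$ (i * n + a, c))"

definition col_blk :: "nat \<Rightarrow> 'a mat \<Rightarrow> nat \<Rightarrow> 'a mat" where
  "col_blk n W j = mat (dim_row W) n (\<lambda>(c, b). W $$ (c, j * n + b))"

definition vstack :: "nat \<Rightarrow> nat \<Rightarrow> (nat \<Rightarrow> 'a mat) \<Rightarrow> nat \<Rightarrow> 'a mat" where
  "vstack n k f m = mat (m * n) k (\<lambda>(p, c). f (p div n) $$ (p mod n, c))"

definition hstack :: "nat \<Rightarrow> nat \<Rightarrow> (nat \<Rightarrow> 'a mat) \<Rightarrow> nat \<Rightarrow> 'a mat" where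
  "hstack k n f m = mat k (m * n) (\<lambda>(c, q). f (q div n) $$ (c, q mod n))"

lemma block_index_less: "i < m \<Longrightarrow> a < n \<Longrightarrow> i * n + a < m * (n :: nat)"
proof -
  assume "i < m" "a < n"
  then have "i * n + a < (i + 1) * n" by simp
  also have "\<dots> \<le> m * n" using \<open>i < m\<close> by (intro mult_le_mono1) simp
  finally show ?thesis .
qed

lemma blk_mult:
  assumes "U \<in> carrier_mat (m * n) k" "W \<in> carrier_mat k (m * n)" "i < m" "j < m"
  shows "blk n (U * W) i j = row_blk n U i * col_blk n W j"
  using assms block_index_less[of i m _ n] block_index_less[of j m _ n]
  by (intro eq_matI) (auto simp: blk_def row_blk_def col_blk_def scalar_prod_def)

lemma row_blk_vstack:
  assumes "i < m" "f i \<in> carrier_mat n k"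
  shows "row_blk n (vstack n k f m) i = f i"
  using assms block_index_less[of i m _ n] by (intro eq_matI) (auto simp: row_blk_def vstack_def)

lemma col_blk_hstack:
  assumes "j < m" "f j \<in> carrier_mat k n"
  shows "col_blk n (hstack k n f m) j = f j"
  using assms block_index_less[of j m _ n] by (intro eq_matI) (auto simp: col_blk_def hstack_def)

lemma mem_mat_span:
  assumes "X \<in> A" "A \<subseteq> carrier_mat n n"
  shows "X \<in> mat_span n A"
proof -
  have "X = mat n n (\<lambda>ab. \<Sum>j<Suc 0. (\<lambda>_. 1) j * (\<lambda>_. X) j $$ ab)"
    using assms by (intro eq_matI) auto
  then show ?thesis
    unfolding mat_span_def using assms(1)
    by (intro CollectI exI[of _ "Suc 0"] exI[of _ "\<lambda>_. 1"] exI[of _ "\<lambda>_. X"]) auto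
qed

lemma mat_span_subset:
  assumes carrier: "S \<subseteq> carrier_mat n n" and zero: "0\<^sub>m n n \<in> S"
    and add: "\<forall>X\<in>S. \<forall>Y\<in>S. X + Y \<in> S" and smult: "\<forall>a. \<forall>X\<in>S. a \<cdot>\<^sub>m X \<in> S"
    and "A \<subseteq> S"
  shows "mat_span n A \<subseteq> S"
proof
  fix X assume "X \<in> mat_span n A"
  then obtain N and c :: "nat \<Rightarrow> complex" and M where M: "\<forall>j<N. M j \<in> A" and X: "X = mat n n (\<lambda>ab. \<Sum>j<N. c j * M j $$ ab)"
    unfolding mat_span_def by blast
  have "mat n n (\<lambda>ab. \<Sum>j<N'. c j * M j $$ ab) \<in> S" if "N' \<le> N" for N'
    using that
  proof (induction N')
    case 0
    have "mat n n (\<lambda>ab. \<Sum>j<0. c j * M j $$ ab) = 0\<^sub>m n n" by (intro eq_matI) auto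
    then show ?case using zero by simp
  next
    case (Suc N')
    have "M N' \<in> S" using Suc.prems M \<open>A \<subseteq> S\<close> by auto
    then have "M N' \<in> carrier_mat n n" using carrier by auto
    then have "mat n n (\<lambda>ab. \<Sum>j<Suc N'. c j * M j $$ ab)
        = mat n n (\<lambda>ab. \<Sum>j<N'. c j * M j $$ ab) + c N' \<cdot>\<^sub>m M N'"
      by (intro eq_matI) auto
    then show ?case using Suc add smult \<open>M N' \<in> S\<close> by simp
  qed
  then show "X \<in> S" using X by simp
qed

lemma msum_cong: "(\<And>i. i < m \<Longrightarrow> f i = g i) \<Longrightarrow> msum r c f m = msum r c g m"
  unfolding msum_def by (intro eq_matI) auto

definition haemers_matrix :: "nat \<Rightarrow> complex mat set \<Rightarrow> nat \<Rightarrow> complex mat \<Rightarrow> bool" where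
  "haemers_matrix n S m B \<longleftrightarrow> B \<in> carrier_mat (m * n) (m * n)
     \<and> (\<forall>i<m. \<forall>j<m. blk n B i j \<in> S) \<and> msum n n (\<lambda>i. blk n B i i) m = 1\<^sub>m n"

text \<open>The pair of families (E, F) stands for the map \<Psi>(X) = \<Sum> E_i X F_i^\<dagger>.\<close>
definition tp_family :: "nat \<Rightarrow> complex mat set \<Rightarrow> nat \<Rightarrow> nat \<Rightarrow>
    (nat \<Rightarrow> complex mat) \<Rightarrow> (nat \<Rightarrow> complex mat) \<Rightarrow> bool" where
  "tp_family n S k m E F \<longleftrightarrow> (\<forall>i<m. E i \<in> carrier_mat k n \<and> F i \<in> carrier_mat k n)
     \<and> msum n n (\<lambda>i. mat_adjoint (F i) * E i) m = 1\<^sub>m n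
     \<and> mat_span n {mat_adjoint (F i) * E j | i j. i < m \<and> j < m} \<subseteq> S"

lemma tp_family_of_haemers_matrix:
  assumes S: "nc_graph n S" and B: "haemers_matrix n S m B"
  shows "\<exists>E F. tp_family n S (vec_space.rank (m * n) B) m E F"
proof -
  interpret vec_space "TYPE(complex)" "m * n" .
  obtain U W where U: "U \<in> carrier_mat (m * n) (rank B)" and W: "W \<in> carrier_mat (rank B) (m * n)"
    and BUW: "B = U * W"
    using rank_factorization B unfolding haemers_matrix_def by blast
  define E where "E j = col_blk n W j" for j
  define F where "F i = mat_adjoint (row_blk n U i)" for i
  have prod: "mat_adjoint (F i) * E j = blk n B i j" if "i < m" "j < m" for i j
    using blk_mult[OF U W that] by (simp add: BUW E_def F_def)
  have "{mat_adjoint (F i) * E j | i j. i < m \<and> j < m} \<subseteq> S"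
    using prod B unfolding haemers_matrix_def by auto
  then have "mat_span n {mat_adjoint (F i) * E j | i j. i < m \<and> j < m} \<subseteq> S"
    using S unfolding nc_graph_def by (intro mat_span_subset) auto
  moreover have "msum n n (\<lambda>i. mat_adjoint (F i) * E i) m = 1\<^sub>m n"
    using B prod msum_cong[of m "\<lambda>i. mat_adjoint (F i) * E i"] unfolding haemers_matrix_def by simp
  moreover have "\<forall>i<m. E i \<in> carrier_mat (rank B) n \<and> F i \<in> carrier_mat (rank B) n"
    using U W by (simp add: E_def F_def row_blk_def col_blk_def)
  ultimately show ?thesis unfolding tp_family_def by blast
qed

lemma haemers_matrix_of_tp_family:
  assumes "tp_family n S k m E F"
  shows "\<exists>B. haemers_matrix n S m B \<and> vec_space.rank (m * n) B \<le> k"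
proof -
  interpret vec_space "TYPE(complex)" "m * n" .
  have EF: "\<And>i. i < m \<Longrightarrow> E i \<in> carrier_mat k n \<and> F i \<in> carrier_mat k n"
    and sum: "msum n n (\<lambda>i. mat_adjoint (F i) * E i) m = 1\<^sub>m n"
    and span: "mat_span n {mat_adjoint (F i) * E j | i j. i < m \<and> j < m} \<subseteq> S"
    using assms unfolding tp_family_def by auto
  define U where "U = vstack n k (\<lambda>i. mat_adjoint (F i)) m"
  define W where "W = hstack k n E m"
  have U: "U \<in> carrier_mat (m * n) k" and W: "W \<in> carrier_mat k (m * n)"
    by (simp_all add: U_def W_def vstack_def hstack_def)
  have prod: "blk n (U * W) i j = mat_adjoint (F i) * E j" if "i < m" "j < m" for i j
    using blk_mult[OF U W that] EF that
    by (simp add: U_def W_def row_blk_vstack col_blk_hstack)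
  have "mat_adjoint (F i) * E j \<in> carrier_mat n n" if "i < m" "j < m" for i j
    using EF[OF that(1)] EF[OF that(2)] by (metis mat_adjoint_carrier_mat mult_carrier_mat)
  then have "{mat_adjoint (F i) * E j | i j. i < m \<and> j < m} \<subseteq> carrier_mat n n"
    by blast
  then have "mat_adjoint (F i) * E j \<in> mat_span n {mat_adjoint (F i) * E j | i j. i < m \<and> j < m}"
    if "i < m" "j < m" for i j
    by (rule mem_mat_span[rotated]) (use that in blast)
  then have "blk n (U * W) i j \<in> S" if "i < m" "j < m" for i j
    using prod[OF that] span that by auto
  moreover have "msum n n (\<lambda>i. blk n (U * W) i i) m = 1\<^sub>m n"
    unfolding sum[symmetric] by (rule msum_cong) (simp add: prod)
  moreover have "U * W \<in> carrier_mat (m * n) (m * n)" using U W by simp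
  ultimately have "haemers_matrix n S m (U * W)" unfolding haemers_matrix_def by blast
  then show ?thesis using rank_mult_le_inner_dim[OF U W] by blast
qed

text \<open>No existence hypothesis is needed: if Q holds nowhere, neither does P, and both sides
  are LEAST of the empty predicate.\<close>
lemma Least_eq_by_domination:
  fixes P Q :: "nat \<Rightarrow> bool"
  assumes QP: "\<And>r. Q r \<Longrightarrow> P r" and PQ: "\<And>k. P k \<Longrightarrow> \<exists>r\<le>k. Q r"
  shows "(LEAST r. Q r) = (LEAST k. P k)"
proof (cases "\<exists>r. Q r")
  case True
  then have "Q (LEAST r. Q r)" by (rule LeastI_ex)
  show ?thesis
  proof (rule Least_equality[symmetric])
    show "P (LEAST r. Q r)" using QP \<open>Q (LEAST r. Q r)\<close> .
    show "(LEAST r. Q r) \<le> k" if "P k" for k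
      using PQ[OF that] by (auto intro: Least_le le_trans)
  qed
next
  case False
  then have "Q = (\<lambda>_. False)" "P = (\<lambda>_. False)" using PQ by auto
  then show ?thesis by simp
qed

theorem mainTheorem6:
  fixes n :: nat and S :: "complex mat set"
  assumes "nc_graph n S"
  shows "haemers n S = (LEAST k. \<exists>m (E :: nat \<Rightarrow> complex mat) (F :: nat \<Rightarrow> complex mat).
            (\<forall>i<m. E i \<in> carrier_mat k n \<and> F i \<in> carrier_mat k n)
          \<and> msum n n (\<lambda>i. mat_adjoint (F i) * E i) m = 1\<^sub>m n
          \<and> mat_span n {mat_adjoint (F i) * E j | i j. i < m \<and> j < m} \<subseteq> S)"
proof -
  have "haemers n S = (LEAST r. \<exists>m B. haemers_matrix n S m B \<and> vec_space.rank (m * n) B = r)"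
    unfolding haemers_def haemers_matrix_def by (simp add: conj_assoc)
  also have "\<dots> = (LEAST k. \<exists>m E F. tp_family n S k m E F)"
  proof (rule Least_eq_by_domination)
    show "\<exists>m E F. tp_family n S r m E F"
      if "\<exists>m B. haemers_matrix n S m B \<and> vec_space.rank (m * n) B = r" for r
      using that tp_family_of_haemers_matrix[OF assms] by blast
    show "\<exists>r\<le>k. \<exists>m B. haemers_matrix n S m B \<and> vec_space.rank (m * n) B = r"
      if "\<exists>m E F. tp_family n S k m E F" for k
      using that haemers_matrix_of_tp_family by blast
  qed
  finally show ?thesis unfolding tp_family_def .
qed

end
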